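(* Let $X\neq\{0\}$ be a Hausdorff topological vector space over $\mathbb{K}=\mathbb{R}$ or $\mathbb{C}$ and let $A$ be a nonvoid subset of $X$. If $(x_n)_{n=1}^\infty$ is an $\ell_\infty$-independent sequence of elements of $X$ and $A$ is $[(x_n)_{n=1}^\infty,\mathcal{S}]$-lineable for some infinite dimensional subspace $\mathcal{S}$ of $\ell_\infty$, then $A$ is lineable.
   Context: $\ell_\infty$ is the space of bounded scalar sequences, a subspace of $\mathbb{K}^{\mathbb{N}}$. A sequence $(x_n)_{n=1}^\infty$ in a topological vector space $X$ is $\ell_\infty$-independent if whenever $(c_n)_{n=1}^\infty\in\ell_\infty$ and $\sum_{n=1}^\infty c_nx_n=0$ (convergent series in $X$), then $c_n=0$ for all $n$. For a subspace $\mathcal{S}$ of $\mathbb{K}^{\mathbb{N}}$, a subset $A\subset X$ is $[(x_n)_{n=1}^\infty,\mathcal{S}]$-lineable if for each $(c_n)_{n=1}^\infty\in\mathcal{S}$ the series $\sum_{n=1}^\infty c_nx_n$ converges in $X$ to a vector of $A\cup\{0\}$. A subset $A$ is lineable if $A\cup\{0\}$ contains an infinite dimensional vector subspace. *)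

theory Defs
  imports "HOL-Analysis.Analysis" "HOL-Library.Function_Algebras"
begin

text \<open>Scalars are real or complex; the scalar multiplication of the vector space X is
  passed explicitly as sc (scaleR resp. scaleC in the main theorem).\<close>

definition tvs :: "('k::real_normed_field \<Rightarrow> 'a::{topological_space,ab_group_add} \<Rightarrow> 'a) \<Rightarrow> bool" where
  "tvs sc \<longleftrightarrow> module sc
     \<and> continuous_on UNIV (\<lambda>p::'a \<times> 'a. fst p + snd p)
     \<and> continuous_on UNIV (\<lambda>p::'k \<times> 'a. sc (fst p) (snd p))"

text \<open>ell_infinity: bounded scalar sequences (indices start at 0 instead of 1).\<close>
definition linf :: "(nat \<Rightarrow> 'k::real_normed_field) set" where
  "linf = {c. Bseq c}"

definition seq_scale :: "'k::real_normed_field \<Rightarrow> (nat \<Rightarrow> 'k) \<Rightarrow> (nat \<Rightarrow> 'k)" where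
  "seq_scale a c = (\<lambda>n. a * c n)"

definition infinite_dim_subspace :: "('k::field \<Rightarrow> 'b::ab_group_add \<Rightarrow> 'b) \<Rightarrow> 'b set \<Rightarrow> bool" where
  "infinite_dim_subspace sc V \<longleftrightarrow> module.subspace sc V
     \<and> \<not> (\<exists>B. finite B \<and> B \<subseteq> V \<and> module.span sc B = V)"

definition linf_independent ::
  "('k::real_normed_field \<Rightarrow> 'a::{topological_space,ab_group_add} \<Rightarrow> 'a) \<Rightarrow> (nat \<Rightarrow> 'a) \<Rightarrow> bool" where
  "linf_independent sc x \<longleftrightarrow>
     (\<forall>c \<in> linf. (\<lambda>n. sc (c n) (x n)) sums 0 \<longrightarrow> (\<forall>n. c n = 0))"

definition seq_lineable ::
  "('k::real_normed_field \<Rightarrow> 'a::{topological_space,ab_group_add} \<Rightarrow> 'a) \<Rightarrow> 'a set \<Rightarrow> (nat \<Rightarrow> 'a) \<Rightarrow> (nat \<Rightarrow> 'k) set \<Rightarrow> bool" where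
  "seq_lineable sc A x S \<longleftrightarrow>
     (\<forall>c \<in> S. \<exists>y \<in> A \<union> {0}. (\<lambda>n. sc (c n) (x n)) sums y)"

definition lineable ::
  "('k::field \<Rightarrow> 'a::ab_group_add \<Rightarrow> 'a) \<Rightarrow> 'a set \<Rightarrow> bool" where
  "lineable sc A \<longleftrightarrow> (\<exists>V. infinite_dim_subspace sc V \<and> V \<subseteq> A \<union> {0})"

end

theory Submission
  imports Defs
begin

text \<open>Since \<open>X\<close> is Hausdorff, the summation map \<open>c \<mapsto> \<Sum>\<^sub>n c\<^sub>n x\<^sub>n\<close> is a well-defined linear map on
  \<open>\<S>\<close>, and \<open>\<ell>\<^sub>\<infinity>\<close>-independence of \<open>(x\<^sub>n)\<close> says exactly that it is injective there. Its image is
  therefore a subspace isomorphic to \<open>\<S>\<close>, hence infinite dimensional, and it lies in \<open>A \<union> {0}\<close>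
  by lineability of \<open>A\<close> along \<open>(x\<^sub>n)\<close>.\<close>

definition series_sums ::
  "('k::real_normed_field \<Rightarrow> 'a::{topological_space,ab_group_add} \<Rightarrow> 'a) \<Rightarrow> (nat \<Rightarrow> 'a) \<Rightarrow> (nat \<Rightarrow> 'k) set \<Rightarrow> 'a set"
  where "series_sums sc x S = {y. \<exists>c\<in>S. (\<lambda>n. sc (c n) (x n)) sums y}"

lemma series_sums_mono: "S \<subseteq> T \<Longrightarrow> series_sums sc x S \<subseteq> series_sums sc x T"
  unfolding series_sums_def by blast

lemma module_seq_scale: "module (seq_scale :: 'k::real_normed_field \<Rightarrow> (nat \<Rightarrow> 'k) \<Rightarrow> _)"
  unfolding module_def seq_scale_def by (auto simp: algebra_simps fun_eq_iff)

lemma tvs_module: "tvs sc \<Longrightarrow> module sc"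
  unfolding tvs_def by blast

lemma tvs_tendsto_add:
  fixes sc :: "'k::real_normed_field \<Rightarrow> 'a::{t2_space,ab_group_add} \<Rightarrow> 'a"
    and f g :: "'b \<Rightarrow> 'a"
  assumes "tvs sc" "(f \<longlongrightarrow> a) F" "(g \<longlongrightarrow> b) F"
  shows "((\<lambda>n. f n + g n) \<longlongrightarrow> a + b) F"
proof -
  have "isCont (\<lambda>p::'a \<times> 'a. fst p + snd p) (a, b)"
    using assms(1) unfolding tvs_def by (simp add: continuous_on_eq_continuous_at)
  from isCont_tendsto_compose[OF this tendsto_Pair[OF assms(2,3)]] show ?thesis by simp
qed

lemma tvs_tendsto_scale:
  fixes sc :: "'k::real_normed_field \<Rightarrow> 'a::{t2_space,ab_group_add} \<Rightarrow> 'a"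
    and f :: "'b \<Rightarrow> 'a"
  assumes "tvs sc" "(f \<longlongrightarrow> a) F"
  shows "((\<lambda>n. sc k (f n)) \<longlongrightarrow> sc k a) F"
proof -
  have "isCont (\<lambda>p::'k \<times> 'a. sc (fst p) (snd p)) (k, a)"
    using assms(1) unfolding tvs_def by (simp add: continuous_on_eq_continuous_at)
  from isCont_tendsto_compose[OF this tendsto_Pair[OF tendsto_const assms(2)]] show ?thesis by simp
qed

lemma tvs_sums_add:
  fixes sc :: "'k::real_normed_field \<Rightarrow> 'a::{t2_space,ab_group_add} \<Rightarrow> 'a"
  assumes "tvs sc" "(\<lambda>n. sc (c n) (x n)) sums a" "(\<lambda>n. sc (d n) (x n)) sums b"
  shows "(\<lambda>n. sc ((c + d) n) (x n)) sums (a + b)"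
proof -
  interpret module sc using assms(1) by (rule tvs_module)
  from assms show ?thesis
    unfolding sums_def by (simp add: scale_left_distrib sum.distrib tvs_tendsto_add)
qed

lemma tvs_sums_scale:
  fixes sc :: "'k::real_normed_field \<Rightarrow> 'a::{t2_space,ab_group_add} \<Rightarrow> 'a"
  assumes "tvs sc" "(\<lambda>n. sc (c n) (x n)) sums a"
  shows "(\<lambda>n. sc (seq_scale k c n) (x n)) sums sc k a"
proof -
  interpret module sc using assms(1) by (rule tvs_module)
  from tvs_tendsto_scale[OF assms[unfolded sums_def], of k] show ?thesis
    unfolding sums_def seq_scale_def by (simp add: scale_sum_right)
qed

lemma subspace_series_sums:
  fixes sc :: "'k::real_normed_field \<Rightarrow> 'a::{t2_space,ab_group_add} \<Rightarrow> 'a"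
  assumes "tvs sc" and "module.subspace seq_scale S"
  shows "module.subspace sc (series_sums sc x S)"
proof -
  interpret X: module sc using assms(1) by (rule tvs_module)
  interpret Q: module "seq_scale :: 'k \<Rightarrow> (nat \<Rightarrow> 'k) \<Rightarrow> _" by (rule module_seq_scale)
  show ?thesis
    unfolding X.subspace_def series_sums_def
  proof (intro conjI ballI allI)
    show "0 \<in> {y. \<exists>c\<in>S. (\<lambda>n. sc (c n) (x n)) sums y}"
      using Q.subspace_0[OF assms(2)] by force
  next
    fix a b
    assume "a \<in> {y. \<exists>c\<in>S. (\<lambda>n. sc (c n) (x n)) sums y}" "b \<in> {y. \<exists>c\<in>S. (\<lambda>n. sc (c n) (x n)) sums y}"
    then show "a + b \<in> {y. \<exists>c\<in>S. (\<lambda>n. sc (c n) (x n)) sums y}"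
      using tvs_sums_add[OF assms(1)] Q.subspace_add[OF assms(2)] by blast
  next
    fix k a
    assume "a \<in> {y. \<exists>c\<in>S. (\<lambda>n. sc (c n) (x n)) sums y}"
    then show "sc k a \<in> {y. \<exists>c\<in>S. (\<lambda>n. sc (c n) (x n)) sums y}"
      using tvs_sums_scale[OF assms(1)] Q.subspace_scale[OF assms(2)] by blast
  qed
qed

lemma span_series_sums_subset:
  fixes sc :: "'k::real_normed_field \<Rightarrow> 'a::{t2_space,ab_group_add} \<Rightarrow> 'a"
  assumes "tvs sc"
  shows "module.span sc (series_sums sc x C) \<subseteq> series_sums sc x (module.span seq_scale C)"
proof -
  interpret X: module sc using assms by (rule tvs_module)
  interpret Q: module "seq_scale :: 'k \<Rightarrow> (nat \<Rightarrow> 'k) \<Rightarrow> _" by (rule module_seq_scale)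
  show ?thesis
    by (intro X.span_minimal series_sums_mono Q.span_superset
        subspace_series_sums[OF assms Q.subspace_span])
qed

lemma linf_independent_sums_inj:
  fixes sc :: "'k::real_normed_field \<Rightarrow> 'a::{t2_space,ab_group_add} \<Rightarrow> 'a"
  assumes "tvs sc" "linf_independent sc x" "module.subspace seq_scale S" "S \<subseteq> linf"
    and "c \<in> S" "d \<in> S" "(\<lambda>n. sc (c n) (x n)) sums a" "(\<lambda>n. sc (d n) (x n)) sums a"
  shows "c = d"
proof -
  interpret X: module sc using assms(1) by (rule tvs_module)
  interpret Q: module "seq_scale :: 'k \<Rightarrow> (nat \<Rightarrow> 'k) \<Rightarrow> _" by (rule module_seq_scale)
  let ?e = "c + seq_scale (-1) d"
  have "(\<lambda>n. sc (?e n) (x n)) sums (a + sc (-1) a)"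
    using tvs_sums_add[OF assms(1,7) tvs_sums_scale[OF assms(1,8)]] .
  moreover have "a + sc (-1) a = 0" by (simp add: X.scale_minus_left)
  ultimately have "(\<lambda>n. sc (?e n) (x n)) sums 0" by simp
  moreover have "?e \<in> S"
    using Q.subspace_add[OF assms(3,5) Q.subspace_scale[OF assms(3,6)]] .
  then have "?e \<in> linf" using assms(4) by blast
  ultimately have "\<forall>n. ?e n = 0"
    using assms(2) unfolding linf_independent_def by blast
  then show ?thesis by (auto simp: seq_scale_def fun_eq_iff)
qed

lemma finite_span_of_series_sums:
  fixes sc :: "'k::real_normed_field \<Rightarrow> 'a::{t2_space,ab_group_add} \<Rightarrow> 'a"
  assumes tvs: "tvs sc" and ind: "linf_independent sc x"
    and S: "module.subspace seq_scale S" "S \<subseteq> linf"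
    and summable: "\<forall>c\<in>S. \<exists>y. (\<lambda>n. sc (c n) (x n)) sums y"
    and B: "finite B" "B \<subseteq> series_sums sc x S" "module.span sc B = series_sums sc x S"
  shows "\<exists>C. finite C \<and> C \<subseteq> S \<and> module.span seq_scale C = S"
proof -
  interpret X: module sc using tvs by (rule tvs_module)
  interpret Q: module "seq_scale :: 'k \<Rightarrow> (nat \<Rightarrow> 'k) \<Rightarrow> _" by (rule module_seq_scale)
  have "\<forall>b\<in>B. \<exists>c. c \<in> S \<and> (\<lambda>n. sc (c n) (x n)) sums b"
    using B(2) unfolding series_sums_def by blast
  then obtain coeffs where coeffs: "\<And>b. b \<in> B \<Longrightarrow> coeffs b \<in> S \<and> (\<lambda>n. sc (coeffs b n) (x n)) sums b"
    by metis
  define C where "C = coeffs ` B"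
  have "C \<subseteq> S" using coeffs unfolding C_def by auto
  then have span_C: "Q.span C \<subseteq> S" using S(1) by (rule Q.span_minimal)
  have "B \<subseteq> series_sums sc x C"
    using coeffs unfolding C_def series_sums_def by blast
  have "series_sums sc x S = X.span B" using B(3) by simp
  also have "\<dots> \<subseteq> X.span (series_sums sc x C)" using \<open>B \<subseteq> series_sums sc x C\<close> by (rule X.span_mono)
  also have "\<dots> \<subseteq> series_sums sc x (Q.span C)" using tvs by (rule span_series_sums_subset)
  finally have image_S: "series_sums sc x S \<subseteq> series_sums sc x (Q.span C)" .
  have "S \<subseteq> Q.span C"
  proof
    fix s assume "s \<in> S"
    then obtain y where y: "(\<lambda>n. sc (s n) (x n)) sums y" using summable by blast
    with \<open>s \<in> S\<close> have "y \<in> series_sums sc x S" unfolding series_sums_def by blast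
    with image_S obtain d where d: "d \<in> Q.span C" "(\<lambda>n. sc (d n) (x n)) sums y"
      unfolding series_sums_def by blast
    have "s = d"
      using linf_independent_sums_inj[OF tvs ind S \<open>s \<in> S\<close> _ y d(2)] d(1) span_C by blast
    with d(1) show "s \<in> Q.span C" by simp
  qed
  with span_C have "Q.span C = S" by (rule antisym)
  moreover have "finite C" using B(1) unfolding C_def by simp
  ultimately show ?thesis using \<open>C \<subseteq> S\<close> by blast
qed

lemma lineable_if_seq_lineable:
  fixes sc :: "'k::real_normed_field \<Rightarrow> 'a::{t2_space,ab_group_add} \<Rightarrow> 'a"
  assumes tvs: "tvs sc" and ind: "linf_independent sc x" and "S \<subseteq> linf"
    and S: "infinite_dim_subspace seq_scale S" and lin: "seq_lineable sc A x S"
  shows "lineable sc A"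
proof -
  have sub_S: "module.subspace seq_scale S" using S unfolding infinite_dim_subspace_def by blast
  have summable: "\<forall>c\<in>S. \<exists>y. (\<lambda>n. sc (c n) (x n)) sums y"
    using lin unfolding seq_lineable_def by blast
  have "series_sums sc x S \<subseteq> A \<union> {0}"
  proof
    fix y assume "y \<in> series_sums sc x S"
    then obtain c where "c \<in> S" and y: "(\<lambda>n. sc (c n) (x n)) sums y"
      unfolding series_sums_def by blast
    then obtain y' where "y' \<in> A \<union> {0}" "(\<lambda>n. sc (c n) (x n)) sums y'"
      using lin unfolding seq_lineable_def by blast
    with y show "y \<in> A \<union> {0}" using sums_unique2 by metis
  qed
  moreover have "infinite_dim_subspace sc (series_sums sc x S)"
    unfolding infinite_dim_subspace_def
  proof (intro conjI notI)
    show "module.subspace sc (series_sums sc x S)" using tvs sub_S by (rule subspace_series_sums)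
  next
    assume "\<exists>B. finite B \<and> B \<subseteq> series_sums sc x S \<and> module.span sc B = series_sums sc x S"
    then obtain B where "finite B" "B \<subseteq> series_sums sc x S" "module.span sc B = series_sums sc x S"
      by blast
    from finite_span_of_series_sums[OF tvs ind sub_S \<open>S \<subseteq> linf\<close> summable this]
    show False using S unfolding infinite_dim_subspace_def by blast
  qed
  ultimately show ?thesis unfolding lineable_def by blast
qed

theorem mainTheorem2:
  shows "(\<forall>(A :: 'a::{real_vector,t2_space} set) (x :: nat \<Rightarrow> 'a) (S :: (nat \<Rightarrow> real) set).
            tvs (scaleR :: real \<Rightarrow> 'a \<Rightarrow> 'a) \<and> (\<exists>v::'a. v \<noteq> 0) \<and> A \<noteq> {}
            \<and> linf_independent scaleR x
            \<and> S \<subseteq> linf \<and> infinite_dim_subspace seq_scale S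
            \<and> seq_lineable scaleR A x S
            \<longrightarrow> lineable scaleR A)
       \<and> (\<forall>(sc :: complex \<Rightarrow> 'b \<Rightarrow> 'b) (A :: 'b::{ab_group_add,t2_space} set) (x :: nat \<Rightarrow> 'b) (S :: (nat \<Rightarrow> complex) set).
            tvs sc \<and> (\<exists>v::'b. v \<noteq> 0) \<and> A \<noteq> {}
            \<and> linf_independent sc x
            \<and> S \<subseteq> linf \<and> infinite_dim_subspace seq_scale S
            \<and> seq_lineable sc A x S
            \<longrightarrow> lineable sc A)"
  by (intro conjI allI impI; elim conjE; rule lineable_if_seq_lineable; assumption)

end
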